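(* Let $n\ge3$ and $0<t\le\frac1{\sqrt2}$ with $t\ne\frac3{n+2}$. Then $e_1$ is a local extremum of $A(\cdot,t)$ on $S^{n-1}$: (a) a local maximum if $\frac3{n+2}<t\le\frac1{\sqrt2}$; (b) a local minimum if $0<t<\frac3{n+2}$. For $n=2$, $e_1$ is a local minimum of $A(\cdot,t)$ for $0<t<\frac34$.
   Context: $K=B(\ell_1^n)=\{x\in\mathbb{R}^n:\|x\|_1\le1\}$ is the cross-polytope. For $a\in S^{n-1}$ and $t\in\mathbb{R}$, $H_t(a)=\{x\in\mathbb{R}^n:\langle a,x\rangle=t\}$ and $A(a,t)=\mathrm{vol}_{n-1}(H_t(a)\cap K)$. $e_1=(1,0,\dots,0)$. Local extremum is with respect to a neighborhood of $e_1$ in $S^{n-1}$. *)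

theory Defs
  imports "HOL-Analysis.Analysis"
begin

definition cross_polytope :: "(real^'n) set" where
  "cross_polytope = {x. (\<Sum>i\<in>UNIV. \<bar>x $ i\<bar>) \<le> 1}"

definition hyperplane_param :: "'m::finite itself \<Rightarrow> real^'n \<Rightarrow> (real^'m \<Rightarrow> real^'n)" where
  "hyperplane_param _ a = (SOME U. linear U \<and> (\<forall>y. norm (U y) = norm y) \<and>
       range U = {x. a \<bullet> x = 0})"

text \<open>A(a,t) = vol_(n-1)(H_t(a) \<inter> K), where H_t(a) = t a + a^perp for unit a, computed as
  the (n-1)-dimensional Lebesgue measure of the preimage under an isometric
  parametrization of the hyperplane (here 'm plays the role of R^(n-1)).\<close>
definition section_area :: "'m::finite itself \<Rightarrow> real^'n \<Rightarrow> real \<Rightarrow> real" where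
  "section_area m a t =
     measure lebesgue {y :: real^'m. t *\<^sub>R a + hyperplane_param m a y \<in> cross_polytope}"

definition is_local_max_sphere :: "(real^'n \<Rightarrow> real) \<Rightarrow> real^'n \<Rightarrow> bool" where
  "is_local_max_sphere f p \<longleftrightarrow> (\<exists>e>0. \<forall>a. norm a = 1 \<and> dist a p < e \<longrightarrow> f a \<le> f p)"

definition is_local_min_sphere :: "(real^'n \<Rightarrow> real) \<Rightarrow> real^'n \<Rightarrow> bool" where
  "is_local_min_sphere f p \<longleftrightarrow> (\<exists>e>0. \<forall>a. norm a = 1 \<and> dist a p < e \<longrightarrow> f p \<le> f a)"

end

theory Submission
  imports Defs
begin

text \<open>Let \<open>m = n - 1\<close>, where \<open>n\<close> is the dimension, and let \<open>a\<close> be a unit vector close to \<open>e\<^sub>k\<close>, with \<open>c = a\<^sub>k\<close>.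
  Projected along \<open>e\<^sub>k\<close>, the section \<open>H\<^sub>t(a) \<inter> K\<close> becomes the skewed cross-polytope
  \<open>{v. \<Sum>\<^sub>i\<^sub>\<noteq>\<^sub>k c \<bar>v\<^sub>i\<bar> - a\<^sub>i v\<^sub>i \<le> c - t}\<close>, a union of \<open>2\<^sup>m\<close> stretched standard simplices,
  and the projection multiplies \<open>m\<close>-volume by \<open>c\<close>. This gives the exact formula
  \<open>A(a,t) = A(e\<^sub>k,t) \<cdot> c\<^sup>m\<^sup>-\<^sup>1 (c - t)\<^sup>m / ((1 - t)\<^sup>m \<Prod>\<^sub>j\<^sub>\<noteq>\<^sub>k (c\<^sup>2 - a\<^sub>j\<^sup>2))\<close>.
  The factors of the product sum to \<open>(m + 1) c\<^sup>2 - 1\<close>, so the Weierstrass product inequality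
  and AM-GM squeeze the product between \<open>(m + 1) c\<^sup>2 - m\<close> and \<open>(((m + 1) c\<^sup>2 - 1) / m)\<^sup>m\<close>.
  At \<open>c = 1\<close> both bounds, multiplied by \<open>(1 - t)\<^sup>m\<close>, meet the numerator \<open>c\<^sup>m\<^sup>-\<^sup>1 (c - t)\<^sup>m\<close>,
  and comparing derivatives there shows that the sign of \<open>t - 3 / (m + 3) = t - 3 / (n + 2)\<close>
  decides whether \<open>A(\<cdot>,t)\<close> is locally maximal or minimal at \<open>e\<^sub>k\<close>.\<close>

section \<open>Lebesgue measure under orthogonal maps and axial contractions\<close>

text \<open>HOL-Analysis has the invariance of Lebesgue measure under orthogonal maps only for
  \<open>real^'n\<close> with \<open>'n\<close> of class \<open>wellorder\<close>. In any Euclidean space, Vitali's covering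
  theorem writes an open set, up to a null set, as a disjoint union of balls, and an orthogonal
  map sends it to a disjoint union of balls with the same radii.\<close>

lemma open_ae_disjoint_balls:
  fixes T :: "'a::euclidean_space set"
  assumes T: "open T"
  obtains C where "countable C" and "\<And>i. i \<in> C \<Longrightarrow> 0 < snd i \<and> ball (fst i) (snd i) \<subseteq> T"
    and "pairwise (\<lambda>i j. disjnt (ball (fst i) (snd i)) (ball (fst j) (snd j))) C"
    and "negligible (T - (\<Union>i\<in>C. ball (fst i) (snd i)))"
proof -
  define K where "K = {(x, r). 0 < r \<and> ball x r \<subseteq> T}"
  obtain C where "countable C" "C \<subseteq> K"
    and "pairwise (\<lambda>i j. disjnt (ball (fst i) (snd i)) (ball (fst j) (snd j))) C"
    and "negligible (T - (\<Union>i\<in>C. ball (fst i) (snd i)))"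
  proof (rule Vitali_covering_theorem_balls[of T K fst snd])
    fix x d assume "x \<in> T" "0 < (d::real)"
    then obtain e where "e > 0" "ball x e \<subseteq> T" using T by (meson openE)
    with \<open>0 < d\<close> show "\<exists>i. i \<in> K \<and> x \<in> ball (fst i) (snd i) \<and> snd i < d"
      by (intro exI[of _ "(x, min e (d/2))"]) (auto simp: K_def)
  qed
  then show thesis using that by (force simp: K_def)
qed

lemma emeasure_orthogonal_image_open:
  fixes f :: "'a::euclidean_space \<Rightarrow> 'a"
  assumes f: "orthogonal_transformation f" and T: "open T"
  shows "emeasure lebesgue (f ` T) = emeasure lebesgue T"
proof -
  obtain C where C: "countable C" and C_T: "\<And>i. i \<in> C \<Longrightarrow> 0 < snd i \<and> ball (fst i) (snd i) \<subseteq> T"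
    and disj: "pairwise (\<lambda>i j. disjnt (ball (fst i) (snd i)) (ball (fst j) (snd j))) C"
    and negl: "negligible (T - (\<Union>i\<in>C. ball (fst i) (snd i)))"
    using open_ae_disjoint_balls[OF T] by blast
  define B where "B = (\<Union>i\<in>C. ball (fst i) (snd i))"
  have image_B: "emeasure lebesgue (g ` B)
      = (\<integral>\<^sup>+i. emeasure lebesgue (ball (fst i) (snd i)) \<partial>count_space C)"
    if g: "orthogonal_transformation g" for g :: "'a \<Rightarrow> 'a"
  proof -
    have ball_g: "g ` ball x r = ball (g x) r" for x r
      by (rule image_orthogonal_transformation_ball[OF g])
    have "inj g" using g orthogonal_transformation_inj by blast
    then have disj_g: "disjoint_family_on (\<lambda>i. ball (g (fst i)) (snd i)) C"
      using disj unfolding disjoint_family_on_def pairwise_def disjnt_def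
      by (metis image_Int image_empty ball_g)
    have "emeasure lebesgue (g ` B)
        = (\<integral>\<^sup>+i. emeasure lebesgue (ball (g (fst i)) (snd i)) \<partial>count_space C)"
      unfolding B_def image_UN ball_g
      by (rule emeasure_UN_countable[where X="\<lambda>i. ball (g (fst i)) (snd i)"]) (auto simp: C disj_g)
    also have "\<dots> = (\<integral>\<^sup>+i. emeasure lebesgue (ball (fst i) (snd i)) \<partial>count_space C)"
    proof (rule nn_integral_cong)
      fix i assume "i \<in> space (count_space C)"
      then have "snd i \<ge> 0" using C_T by (simp add: less_imp_le)
      then show "emeasure lebesgue (ball (g (fst i)) (snd i)) = emeasure lebesgue (ball (fst i) (snd i))"
        by (simp add: emeasure_ball)
    qed
    finally show ?thesis .
  qed
  have image_T: "emeasure lebesgue (g ` T) = emeasure lebesgue (g ` B)"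
    if g: "orthogonal_transformation g" for g :: "'a \<Rightarrow> 'a"
  proof -
    have "B \<subseteq> T" using C_T by (auto simp: B_def)
    then have "g ` T = g ` B \<union> g ` (T - B)" by blast
    moreover have "open (g ` B)"
      by (auto simp: B_def image_UN image_orthogonal_transformation_ball[OF g])
    moreover have "negligible (g ` (T - B))"
      using negl orthogonal_transformation_linear[OF g]
      by (intro negligible_differentiable_image_negligible)
        (auto simp: B_def linear_imp_differentiable_on)
    ultimately show ?thesis by (simp add: emeasure_Un_null_set negligible_iff_null_sets)
  qed
  show ?thesis
    using image_T[OF f] image_T[OF orthogonal_transformation_id]
      image_B[OF f] image_B[OF orthogonal_transformation_id]
    by simp
qed

lemma
  fixes f :: "'a::euclidean_space \<Rightarrow> 'a"
  assumes f: "orthogonal_transformation f" and S: "S \<in> lmeasurable"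
  shows measurable_orthogonal_transformation_image: "f ` S \<in> lmeasurable"
    and measure_orthogonal_transformation_image: "measure lebesgue (f ` S) = measure lebesgue S"
proof -
  have lin: "linear f" using f orthogonal_transformation_linear by blast
  have "measure lebesgue (f ` cbox a b) = 1 * measure lebesgue (cbox a b)" for a b
  proof -
    have "negligible (f ` (cbox a b - box a b))"
      using lin negligible_frontier_interval
      by (intro negligible_differentiable_image_negligible) (auto simp: linear_imp_differentiable_on)
    then have "negligible (f ` cbox a b - f ` box a b \<union> (f ` box a b - f ` cbox a b))"
      by (rule negligible_subset) (use box_subset_cbox in blast)
    then have "measure lebesgue (f ` cbox a b) = measure lebesgue (f ` box a b)"
      using lin by (intro measure_negligible_symdiff[symmetric]) (auto simp: measurable_linear_image_interval)
    also have "\<dots> = measure lebesgue (box a b)"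
      by (simp only: measure_def emeasure_orthogonal_image_open[OF f open_box])
    also have "\<dots> = measure lebesgue (cbox a b)"
      by (intro measure_negligible_symdiff)
        (simp_all add: negligible_frontier_interval box_subset_cbox Diff_eq_empty_iff[THEN iffD2])
    finally show ?thesis by simp
  qed
  then have "f ` S \<in> lmeasurable \<and> 1 * measure lebesgue S = measure lebesgue (f ` S)"
    by (rule measure_linear_sufficient[OF lin S])
  then show "f ` S \<in> lmeasurable" "measure lebesgue (f ` S) = measure lebesgue S"
    by auto
qed

lemma norm_power2_cart: "(norm x)\<^sup>2 = (\<Sum>i\<in>UNIV. (x $ i)\<^sup>2)" for x :: "real^'n"
  unfolding power2_norm_eq_inner by (simp add: inner_vec_def power2_eq_square)

definition axis_stretch :: "'n::finite \<Rightarrow> real \<Rightarrow> real^'n \<Rightarrow> real^'n" where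
  "axis_stretch j s y = (\<chi> i. (if i = j then s else 1) * y $ i)"

lemma linear_axis_stretch: "linear (axis_stretch j s)"
  by (auto simp: axis_stretch_def linear_iff vec_eq_iff algebra_simps)

lemma axis_stretch_inverse: "s \<noteq> 0 \<Longrightarrow> axis_stretch j (1 / s) (axis_stretch j s y) = y"
  by (simp add: axis_stretch_def vec_eq_iff)

lemma norm_power2_axis_stretch:
  "(norm (axis_stretch j s y))\<^sup>2 = (norm y)\<^sup>2 + (s\<^sup>2 - 1) * (y $ j)\<^sup>2"
proof -
  have "(\<Sum>i\<in>UNIV. (axis_stretch j s y $ i)\<^sup>2)
      = (\<Sum>i\<in>UNIV. (y $ i)\<^sup>2 + (if i = j then (s\<^sup>2 - 1) * (y $ j)\<^sup>2 else 0))"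
    by (rule sum.cong) (auto simp: axis_stretch_def power_mult_distrib algebra_simps)
  then show ?thesis by (simp add: norm_power2_cart sum.distrib)
qed

lemma
  assumes "S \<in> lmeasurable" and "s \<ge> 0"
  shows lmeasurable_axis_stretch_image: "axis_stretch j s ` S \<in> lmeasurable"
    and measure_axis_stretch_image: "measure lebesgue (axis_stretch j s ` S) = s * measure lebesgue S"
  using assms unfolding axis_stretch_def
  by (simp_all add: measurable_stretch measure_stretch prod.If_cases)

lemma contraction_factorization:
  fixes P :: "real^'m \<Rightarrow> real^'m" and q :: "real^'m"
  assumes lin: "linear P" and norm_P: "\<And>y. (norm (P y))\<^sup>2 = (norm y)\<^sup>2 - (q \<bullet> y)\<^sup>2"
    and q: "q \<bullet> q < 1"
  obtains W R :: "real^'m \<Rightarrow> real^'m" and j :: 'm where "orthogonal_transformation W" "orthogonal_transformation R"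
    "\<And>y. P y = W (axis_stretch j (sqrt (1 - q \<bullet> q)) (R y))"
proof -
  define c where "c = sqrt (1 - q \<bullet> q)"
  have c: "c > 0" and norm_q: "(norm q)\<^sup>2 = 1 - c\<^sup>2"
    using q by (simp_all add: c_def power2_norm_eq_inner)
  fix j :: 'm
  obtain R where R: "orthogonal_transformation R" and Rq: "R (norm q *\<^sub>R axis j (1::real)) = q"
    by (rule orthogonal_transformation_exists[of "norm q *\<^sub>R axis j (1::real)" q]) simp
  have q_R: "q \<bullet> R y = norm q * y $ j" for y
  proof -
    have "q \<bullet> R y = R (norm q *\<^sub>R axis j 1) \<bullet> R y" by (simp only: Rq)
    also have "\<dots> = (norm q *\<^sub>R axis j 1) \<bullet> y"
      using R by (simp only: orthogonal_transformation_def)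
    finally show ?thesis by (simp add: inner_axis')
  qed
  define W where "W = P \<circ> R \<circ> axis_stretch j (1 / c)"
  have "orthogonal_transformation W"
    unfolding orthogonal_transformation
  proof
    show "linear W" unfolding W_def
      using lin R linear_axis_stretch orthogonal_transformation_linear by (blast intro: linear_compose)
    show "\<forall>z. norm (W z) = norm z"
    proof
      fix z :: "real^'m"
      have "(norm (W z))\<^sup>2 = (norm z)\<^sup>2 + ((1 / c)\<^sup>2 - 1) * (z $ j)\<^sup>2 - (norm q)\<^sup>2 * (z $ j / c)\<^sup>2"
        by (simp add: W_def norm_P q_R orthogonal_transformation_norm[OF R]
            norm_power2_axis_stretch power_mult_distrib) (simp add: axis_stretch_def)
      also have "\<dots> = (norm z)\<^sup>2"
        using c by (simp add: norm_q field_simps)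
      finally show "norm (W z) = norm z" by simp
    qed
  qed
  moreover have "orthogonal_transformation (inv R)"
    using R by (rule orthogonal_transformation_inv)
  moreover have "P y = W (axis_stretch j c (inv R y))" for y
    using c orthogonal_transformation_bij[OF R]
    by (simp add: W_def axis_stretch_inverse bij_is_surj surj_f_inv_f)
  ultimately show thesis using that unfolding c_def by blast
qed

lemma
  fixes P :: "real^'m \<Rightarrow> real^'m" and q :: "real^'m"
  assumes "linear P" and "\<And>y. (norm (P y))\<^sup>2 = (norm y)\<^sup>2 - (q \<bullet> y)\<^sup>2"
    and q: "q \<bullet> q < 1" and S: "S \<in> lmeasurable"
  shows lmeasurable_contraction_image: "P ` S \<in> lmeasurable"
    and measure_contraction_image: "measure lebesgue (P ` S) = sqrt (1 - q \<bullet> q) * measure lebesgue S"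
proof -
  obtain W R :: "real^'m \<Rightarrow> real^'m" and j :: 'm where W: "orthogonal_transformation W" and R: "orthogonal_transformation R"
    and P: "\<And>y. P y = W (axis_stretch j (sqrt (1 - q \<bullet> q)) (R y))"
    using contraction_factorization assms by blast
  define c where "c = sqrt (1 - q \<bullet> q)"
  have PS: "P ` S = W ` axis_stretch j c ` R ` S"
    by (auto simp: P c_def image_iff)
  have RS: "R ` S \<in> lmeasurable" "measure lebesgue (R ` S) = measure lebesgue S"
    using R S by (rule measurable_orthogonal_transformation_image, rule measure_orthogonal_transformation_image)
  have "c \<ge> 0" using q by (simp add: c_def)
  then have stretched: "axis_stretch j c ` R ` S \<in> lmeasurable"
    "measure lebesgue (axis_stretch j c ` R ` S) = c * measure lebesgue S"
    using RS by (simp_all only: lmeasurable_axis_stretch_image measure_axis_stretch_image)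
  show "P ` S \<in> lmeasurable" "measure lebesgue (P ` S) = c * measure lebesgue S"
    unfolding PS using W stretched
    by (simp_all only: measurable_orthogonal_transformation_image measure_orthogonal_transformation_image)
qed

lemma surj_contraction:
  fixes P :: "real^'m::finite \<Rightarrow> real^'m" and q :: "real^'m"
  assumes lin: "linear P" and norm_P: "\<And>y. (norm (P y))\<^sup>2 = (norm y)\<^sup>2 - (q \<bullet> y)\<^sup>2"
    and q: "q \<bullet> q < 1"
  shows "surj P"
proof -
  have "y = 0" if "P y = 0" for y
  proof -
    have "(q \<bullet> y)\<^sup>2 \<le> (q \<bullet> q) * (y \<bullet> y)"
      using Cauchy_Schwarz_ineq by blast
    moreover have "(y \<bullet> y) = (q \<bullet> y)\<^sup>2"
      using norm_P[of y] that by (simp add: power2_norm_eq_inner)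
    ultimately have "(1 - q \<bullet> q) * (y \<bullet> y) \<le> 0" by (simp add: algebra_simps)
    then have "y \<bullet> y \<le> 0" using q by (simp add: mult_le_0_iff)
    then show "y = 0" by (metis inner_eq_zero_iff inner_ge_zero order_antisym)
  qed
  then have "inj P" by (simp add: linear_injective_0[OF lin])
  then show ?thesis by (simp add: linear_injective_imp_surjective lin)
qed

section \<open>The skewed cross-polytope\<close>

definition std_simplex :: "(real^'m::finite) set" where
  "std_simplex = {z. (\<forall>i. 0 \<le> z $ i) \<and> (\<Sum>i\<in>UNIV. z $ i) \<le> 1}"

lemma std_simplex_lmeasurable: "(std_simplex :: (real^'m::finite) set) \<in> lmeasurable"
proof -
  have "(std_simplex :: (real^'m) set) \<subseteq> cbox 0 1"
  proof
    fix z :: "real^'m" assume z: "z \<in> std_simplex"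
    have "z $ i \<le> (\<Sum>j\<in>UNIV. z $ j)" for i
      using z by (intro member_le_sum) (auto simp: std_simplex_def)
    then have "z $ i \<le> 1" for i
      using z order_trans by (fastforce simp: std_simplex_def)
    then show "z \<in> cbox 0 1" using z by (simp add: std_simplex_def mem_box_cart)
  qed
  then have "bounded (std_simplex :: (real^'m) set)" using bounded_cbox bounded_subset by blast
  moreover have "closed (std_simplex :: (real^'m) set)"
    unfolding std_simplex_def
    by (intro closed_Collect_conj closed_Collect_all closed_Collect_le continuous_intros)
  ultimately show ?thesis by (intro lmeasurable_compact) (simp add: compact_eq_bounded_closed)
qed

text \<open>For \<open>a\<close> near \<open>e\<^sub>k\<close>, projecting \<open>H\<^sub>t(a) \<inter> K\<close> along \<open>e\<^sub>k\<close> gives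
  \<open>skew_cross (a$k) b (a$k - t)\<close>, where \<open>b\<close> lists the other coordinates of \<open>a\<close>.
  Its piece in each orthant is a stretched standard simplex.\<close>

definition skew_cross :: "real \<Rightarrow> ('m::finite \<Rightarrow> real) \<Rightarrow> real \<Rightarrow> (real^'m) set" where
  "skew_cross c b r = {v. (\<Sum>i\<in>UNIV. c * \<bar>v $ i\<bar> - b i * v $ i) \<le> r}"

definition orthant_stretch :: "real \<Rightarrow> ('m::finite \<Rightarrow> real) \<Rightarrow> real \<Rightarrow> ('m \<Rightarrow> real) \<Rightarrow> real^'m \<Rightarrow> real^'m" where
  "orthant_stretch c b r e z = (\<chi> i. (e i * r / (c - e i * b i)) * z $ i)"

lemma orthant_stretch_skew_term:
  assumes e: "e i \<in> {-1, 1}" and "\<bar>b i\<bar> < c" and "r > 0" and "z $ i \<ge> 0"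
  shows "c * \<bar>orthant_stretch c b r e z $ i\<bar> - b i * orthant_stretch c b r e z $ i = r * z $ i"
proof -
  define w where "w = r * z $ i / (c - e i * b i)"
  have pos: "c - e i * b i > 0" using assms(1,2) by (auto simp: abs_less_iff)
  then have "w \<ge> 0" using assms(3,4) by (simp add: w_def)
  moreover have v: "orthant_stretch c b r e z $ i = e i * w"
    by (simp add: orthant_stretch_def w_def)
  ultimately have "\<bar>orthant_stretch c b r e z $ i\<bar> = w" using e by auto
  then have "c * \<bar>orthant_stretch c b r e z $ i\<bar> - b i * orthant_stretch c b r e z $ i
      = (c - e i * b i) * w"
    by (simp add: v algebra_simps)
  also have "\<dots> = r * z $ i" using pos by (simp add: w_def)
  finally show ?thesis .
qed

lemma skew_cross_eq_Union_orthants: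
  fixes b :: "'m::finite \<Rightarrow> real"
  assumes r: "r > 0" and bc: "\<And>i. \<bar>b i\<bar> < c"
  shows "skew_cross c b r = (\<Union>e\<in>PiE UNIV (\<lambda>_. {-1, 1}). orthant_stretch c b r e ` std_simplex)"
proof (intro equalityI subsetI)
  fix v :: "real^'m" assume v: "v \<in> skew_cross c b r"
  define e where "e = (\<lambda>i. if v $ i \<ge> 0 then 1 else -1 :: real)"
  define z :: "real^'m" where "z = (\<chi> i. (c - e i * b i) * \<bar>v $ i\<bar> / r)"
  have e: "e i \<in> {-1, 1}" and pos: "c - e i * b i > 0" for i
    using bc[of i] by (auto simp: e_def abs_less_iff)
  have z_nonneg: "0 \<le> z $ i" for i
    using pos[of i] r by (simp add: z_def)
  have "z $ i = (c * \<bar>v $ i\<bar> - b i * v $ i) / r" for i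
    by (auto simp: z_def e_def algebra_simps)
  then have "(\<Sum>i\<in>UNIV. z $ i) \<le> 1"
    using v r by (simp add: skew_cross_def sum_divide_distrib[symmetric])
  then have "z \<in> std_simplex" using z_nonneg by (simp add: std_simplex_def)
  moreover have "orthant_stretch c b r e z = v"
  proof -
    have "(e i * r / (c - e i * b i)) * z $ i = v $ i" for i
    proof -
      have "c + b i > 0" "c - b i > 0" using bc[of i] by (auto simp: abs_less_iff)
      then show ?thesis using r by (auto simp: z_def e_def field_simps)
    qed
    then show ?thesis by (simp add: orthant_stretch_def vec_eq_iff)
  qed
  moreover have "e \<in> PiE UNIV (\<lambda>_. {-1, 1})" using e by auto
  ultimately show "v \<in> (\<Union>e\<in>PiE UNIV (\<lambda>_. {-1, 1}). orthant_stretch c b r e ` std_simplex)" by blast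
next
  fix v :: "real^'m" assume "v \<in> (\<Union>e\<in>PiE UNIV (\<lambda>_. {-1, 1}). orthant_stretch c b r e ` std_simplex)"
  then obtain e z where e: "e \<in> PiE UNIV (\<lambda>_. {-1, 1})" and z: "z \<in> std_simplex"
    and v: "v = orthant_stretch c b r e z" by blast
  have "c * \<bar>v $ i\<bar> - b i * v $ i = r * z $ i" for i
    unfolding v using e z bc[of i] r by (intro orthant_stretch_skew_term) (auto simp: std_simplex_def)
  then have "(\<Sum>i\<in>UNIV. c * \<bar>v $ i\<bar> - b i * v $ i) = r * (\<Sum>i\<in>UNIV. z $ i)"
    by (simp add: sum_distrib_left)
  also have "\<dots> \<le> r" using z r by (simp add: std_simplex_def)
  finally show "v \<in> skew_cross c b r" by (simp add: skew_cross_def)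
qed

lemma orthant_stretch_overlap_negligible:
  fixes b :: "'m::finite \<Rightarrow> real"
  assumes r: "r > 0" and bc: "\<And>i. \<bar>b i\<bar> < c"
    and e: "e \<in> PiE UNIV (\<lambda>_. {-1, 1})" and e': "e' \<in> PiE UNIV (\<lambda>_. {-1, 1})" and "e \<noteq> e'"
  shows "negligible (orthant_stretch c b r e ` std_simplex \<inter> orthant_stretch c b r e' ` std_simplex)"
proof -
  obtain i where i: "e i \<noteq> e' i" using \<open>e \<noteq> e'\<close> by (auto simp: fun_eq_iff)
  have sign: "f i * (orthant_stretch c b r f z $ i) \<ge> 0"
    if "f \<in> PiE UNIV (\<lambda>_. {-1, 1})" "z \<in> std_simplex" for f z
  proof -
    have "f i = -1 \<or> f i = 1" and "z $ i \<ge> 0"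
      using that by (auto simp: std_simplex_def)
    then show ?thesis
      using bc[of i] r by (auto simp: orthant_stretch_def abs_less_iff)
  qed
  have "orthant_stretch c b r e ` std_simplex \<inter> orthant_stretch c b r e' ` std_simplex \<subseteq> {x. x $ i = 0}"
  proof clarify
    fix z z' assume "z \<in> std_simplex" "z' \<in> std_simplex"
      and eq: "orthant_stretch c b r e z = orthant_stretch c b r e' z'"
    then have "e i * (orthant_stretch c b r e z $ i) \<ge> 0" "e' i * (orthant_stretch c b r e z $ i) \<ge> 0"
      using sign e e' by metis+
    moreover have "e i \<in> {-1, 1}" "e' i \<in> {-1, 1}" using e e' by auto
    moreover from this have "e' i = - e i" using i by auto
    ultimately show "orthant_stretch c b r e z $ i = 0" by auto
  qed
  then show ?thesis
    using negligible_subset[OF negligible_standard_hyperplane_cart] by blast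
qed

lemma measure_orthant_stretch_simplex:
  fixes b :: "'m::finite \<Rightarrow> real"
  assumes r: "r > 0" and bc: "\<And>i. \<bar>b i\<bar> < c" and e: "e \<in> PiE UNIV (\<lambda>_. {-1, 1})"
  shows "measure lebesgue (orthant_stretch c b r e ` std_simplex)
      = (\<Prod>i\<in>UNIV. r / (c - e i * b i)) * measure lebesgue (std_simplex :: (real^'m) set)"
proof -
  have "\<bar>e i * r / (c - e i * b i)\<bar> = r / (c - e i * b i)" for i
  proof -
    have "e i = -1 \<or> e i = 1" using e by auto
    then show ?thesis using bc[of i] r by (auto simp: abs_mult abs_less_iff)
  qed
  then show ?thesis
    unfolding orthant_stretch_def measure_stretch[OF std_simplex_lmeasurable]
    by (simp only: abs_prod)
qed

lemma measure_skew_cross: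
  fixes b :: "'m::finite \<Rightarrow> real"
  assumes r: "r > 0" and bc: "\<And>i. \<bar>b i\<bar> < c"
  shows "measure lebesgue (skew_cross c b r) =
         measure lebesgue (std_simplex :: (real^'m) set) * (\<Prod>i\<in>UNIV. 2 * c * r / (c\<^sup>2 - (b i)\<^sup>2))"
proof -
  let ?E = "PiE (UNIV :: 'm set) (\<lambda>_. {-1, 1 :: real})"
  have lmeasurable_piece: "orthant_stretch c b r e ` std_simplex \<in> lmeasurable" for e
    unfolding orthant_stretch_def by (rule measurable_stretch[OF std_simplex_lmeasurable])
  have "measure lebesgue (skew_cross c b r) = (\<Sum>e\<in>?E. measure lebesgue (orthant_stretch c b r e ` std_simplex))"
    unfolding skew_cross_eq_Union_orthants[OF r bc]
    by (rule measure_negligible_finite_Union_image)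
      (auto simp: finite_PiE lmeasurable_piece pairwise_def orthant_stretch_overlap_negligible[OF r bc])
  also have "\<dots> = (\<Sum>e\<in>?E. \<Prod>i\<in>UNIV. r / (c - e i * b i)) * measure lebesgue (std_simplex :: (real^'m) set)"
    by (simp add: measure_orthant_stretch_simplex[OF r bc] sum_distrib_right)
  also have "(\<Sum>e\<in>?E. \<Prod>i\<in>UNIV. r / (c - e i * b i)) = (\<Prod>i\<in>UNIV. \<Sum>e\<in>{-1, 1}. r / (c - e * b i))"
    by (rule prod_sum_PiE[symmetric]) auto
  also have "(\<Prod>i\<in>UNIV. \<Sum>e\<in>{-1, 1}. r / (c - e * b i)) = (\<Prod>i\<in>UNIV. 2 * c * r / (c\<^sup>2 - (b i)\<^sup>2))"
  proof (rule prod.cong[OF refl])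
    fix i
    have "c - b i > 0" "c + b i > 0" using bc[of i] by (auto simp: abs_less_iff)
    moreover have "c\<^sup>2 - (b i)\<^sup>2 = (c - b i) * (c + b i)" by (simp add: power2_eq_square algebra_simps)
    ultimately show "(\<Sum>e\<in>{-1, 1}. r / (c - e * b i)) = 2 * c * r / (c\<^sup>2 - (b i)\<^sup>2)"
      by (simp add: field_simps)
  qed
  finally show ?thesis by simp
qed

section \<open>Hyperplane sections of the cross-polytope\<close>

lemma sum_UNIV_split_reindex:
  fixes f :: "'n::finite \<Rightarrow> 'a::comm_monoid_add" and \<sigma> :: "'m::finite \<Rightarrow> 'n"
  assumes inj: "inj \<sigma>" and range: "range \<sigma> = -{k}"
  shows "(\<Sum>j\<in>UNIV. f j) = f k + (\<Sum>i\<in>UNIV. f (\<sigma> i))"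
proof -
  have "UNIV = insert k (range \<sigma>)" and "k \<notin> range \<sigma>" using range by auto
  then have "(\<Sum>j\<in>UNIV. f j) = f k + (\<Sum>j\<in>range \<sigma>. f j)"
    by (metis finite sum.insert)
  also have "(\<Sum>j\<in>range \<sigma>. f j) = (\<Sum>i\<in>UNIV. f (\<sigma> i))"
    using inj by (simp add: sum.reindex)
  finally show ?thesis .
qed

lemma abs_add_le_one_iff:
  fixes t c x L B :: real
  assumes t: "0 < t" "t < c" and L: "0 \<le> L" "B \<le> t * L" and x: "c * x + B = t"
  shows "\<bar>x\<bar> + L \<le> 1 \<longleftrightarrow> c * L - B \<le> c - t"
proof
  assume h: "\<bar>x\<bar> + L \<le> 1"
  then have "t * L \<le> t" using t L by (simp add: mult_left_le)
  then have "c * x \<ge> 0" using L x by linarith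
  then have "x \<ge> 0" using t by (simp add: zero_le_mult_iff)
  then have "c * (x + L) \<le> c * 1" using h t by (intro mult_left_mono) auto
  then show "c * L - B \<le> c - t" using x by (simp add: algebra_simps)
next
  assume h: "c * L - B \<le> c - t"
  have "B \<le> t"
  proof (rule ccontr)
    assume "\<not> B \<le> t"
    then have "t * 1 < t * L" using L by simp
    then have "1 < L" using t by (simp add: mult_less_cancel_left_pos)
    then have "(c - t) * 1 < (c - t) * L" using t by (intro mult_strict_left_mono) auto
    then show False using h L by (simp add: algebra_simps)
  qed
  then have "c * x \<ge> 0" using x by linarith
  then have "x \<ge> 0" using t by (simp add: zero_le_mult_iff)
  moreover have "c * (x + L) \<le> c * 1" using h x by (simp add: algebra_simps)
  ultimately show "\<bar>x\<bar> + L \<le> 1" using t by simp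
qed

lemma l1_hyperplane_section_iff:
  fixes v b :: "'i \<Rightarrow> real"
  assumes "finite I" and t: "0 < t" "t < c" and b: "\<And>i. i \<in> I \<Longrightarrow> \<bar>b i\<bar> \<le> t"
    and x: "c * x + (\<Sum>i\<in>I. b i * v i) = t"
  shows "\<bar>x\<bar> + (\<Sum>i\<in>I. \<bar>v i\<bar>) \<le> 1 \<longleftrightarrow> (\<Sum>i\<in>I. c * \<bar>v i\<bar> - b i * v i) \<le> c - t"
proof -
  have "b i * v i \<le> t * \<bar>v i\<bar>" if "i \<in> I" for i
  proof -
    have "b i * v i \<le> \<bar>b i\<bar> * \<bar>v i\<bar>" by (simp add: abs_mult[symmetric])
    also have "\<dots> \<le> t * \<bar>v i\<bar>" using b[OF that] by (rule mult_right_mono) simp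
    finally show ?thesis .
  qed
  then have B: "(\<Sum>i\<in>I. b i * v i) \<le> t * (\<Sum>i\<in>I. \<bar>v i\<bar>)"
    by (simp add: sum_distrib_left sum_mono)
  have "(\<Sum>i\<in>I. c * \<bar>v i\<bar> - b i * v i) = c * (\<Sum>i\<in>I. \<bar>v i\<bar>) - (\<Sum>i\<in>I. b i * v i)"
    by (simp add: sum_subtractf sum_distrib_left)
  then show ?thesis
    using abs_add_le_one_iff[OF t sum_nonneg B x] by simp
qed

lemma inner_preserving_of_norm_preserving:
  fixes U :: "'a::real_inner \<Rightarrow> 'b::real_inner"
  assumes "linear U" and "\<And>y. norm (U y) = norm y"
  shows "U x \<bullet> U y = x \<bullet> y"
  using assms by (simp add: dot_norm linear_add[symmetric])

lemma hyperplane_param_isometry: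
  fixes a :: "real^'n::finite"
  assumes a: "a \<noteq> 0" and dim: "CARD('n) = CARD('m::finite) + 1"
  shows "linear (hyperplane_param TYPE('m) a)"
    and "\<And>y. norm (hyperplane_param TYPE('m) a y) = norm y"
    and "range (hyperplane_param TYPE('m) a) = {x. a \<bullet> x = 0}"
proof -
  have "dim (UNIV :: (real^'m) set) = dim {x. a \<bullet> x = 0}"
    using dim_hyperplane[OF a] dim by simp
  then obtain U :: "real^'m \<Rightarrow> real^'n" where "linear U" "U ` UNIV = {x. a \<bullet> x = 0}"
      "\<And>y. y \<in> UNIV \<Longrightarrow> norm (U y) = norm y"
    using isometries_subspaces[OF subspace_UNIV subspace_hyperplane] by metis
  then have "\<exists>U :: real^'m \<Rightarrow> real^'n. linear U \<and> (\<forall>y. norm (U y) = norm y) \<and> range U = {x. a \<bullet> x = 0}"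
    by blast
  from someI_ex[OF this] show "linear (hyperplane_param TYPE('m) a)"
    "\<And>y. norm (hyperplane_param TYPE('m) a y) = norm y"
    "range (hyperplane_param TYPE('m) a) = {x. a \<bullet> x = 0}"
    unfolding hyperplane_param_def by blast+
qed

lemma hyperplane_isometry_component:
  fixes U :: "real^'m::finite \<Rightarrow> real^'n::finite" and a :: "real^'n"
  assumes lin: "linear U" and norm: "\<And>y. norm (U y) = norm y"
    and range: "range U = {x. a \<bullet> x = 0}" and a: "norm a = 1"
  obtains q where "\<And>y. U y $ k = q \<bullet> y" and "q \<bullet> q = 1 - (a $ k)\<^sup>2"
proof -
  have aa: "a \<bullet> a = 1" using a by (simp add: dot_square_norm)
  have inner_U: "U x \<bullet> U y = x \<bullet> y" for x y
    by (rule inner_preserving_of_norm_preserving[OF lin norm])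
  have "a \<bullet> (axis k 1 - a $ k *\<^sub>R a) = 0"
    using aa by (simp add: inner_diff_right inner_axis inner_commute)
  then obtain q where q: "U q = axis k 1 - a $ k *\<^sub>R a"
    using range by (metis (mono_tags, lifting) mem_Collect_eq rangeE)
  show thesis
  proof
    show "U y $ k = q \<bullet> y" for y
    proof -
      have "a \<bullet> U y = 0" using range by auto
      have "U y $ k = axis k 1 \<bullet> U y" by (simp add: inner_axis')
      also have "axis k 1 = U q + a $ k *\<^sub>R a" by (simp add: q)
      also have "(U q + a $ k *\<^sub>R a) \<bullet> U y = q \<bullet> y"
        using \<open>a \<bullet> U y = 0\<close> by (simp add: inner_add_left inner_U)
      finally show ?thesis .
    qed
    have "q \<bullet> q = (axis k 1 - a $ k *\<^sub>R a) \<bullet> (axis k 1 - a $ k *\<^sub>R a)"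
      by (simp only: q[symmetric] inner_U)
    then show "q \<bullet> q = 1 - (a $ k)\<^sup>2"
      by (simp add: inner_diff_left inner_diff_right inner_axis' inner_axis aa power2_eq_square)
  qed
qed

lemma lmeasurable_cross_polytope_preimage:
  fixes U :: "real^'m::finite \<Rightarrow> real^'n::finite"
  assumes lin: "linear U" and norm: "\<And>y. norm (U y) = norm y"
  shows "{y. p + U y \<in> cross_polytope} \<in> lmeasurable"
proof (rule lmeasurable_compact)
  let ?S = "{y. p + U y \<in> cross_polytope}"
  have "continuous_on UNIV U"
    using lin by (simp add: linear_continuous_on linear_conv_bounded_linear)
  then have "closed ?S"
    unfolding cross_polytope_def mem_Collect_eq by (intro closed_Collect_le continuous_intros) auto
  moreover have "?S \<subseteq> cball 0 (1 + norm p)"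
  proof
    fix y assume "y \<in> ?S"
    then have "norm (p + U y) \<le> 1"
      using norm_le_l1_cart[of "p + U y"] by (simp add: cross_polytope_def)
    then show "y \<in> cball 0 (1 + norm p)"
      using norm_triangle_ineq4[of "p + U y" p] by (simp add: norm)
  qed
  then have "bounded ?S" by (rule bounded_subset[OF bounded_cball])
  ultimately show "compact ?S" by (simp add: compact_eq_bounded_closed)
qed

lemma cross_polytope_hyperplane_iff:
  fixes a x :: "real^'n::finite" and \<sigma> :: "'m::finite \<Rightarrow> 'n"
  assumes x: "a \<bullet> x = t" and t: "0 < t" "t < a $ k" and small: "\<And>j. j \<noteq> k \<Longrightarrow> \<bar>a $ j\<bar> \<le> t"
    and inj: "inj \<sigma>" and \<sigma>: "range \<sigma> = -{k}"
  shows "x \<in> cross_polytope \<longleftrightarrow> (\<chi> i. x $ \<sigma> i) \<in> skew_cross (a $ k) (\<lambda>i. a $ \<sigma> i) (a $ k - t)"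
proof -
  have "a $ k * x $ k + (\<Sum>i\<in>UNIV. a $ \<sigma> i * x $ \<sigma> i) = t"
    using x by (simp add: inner_vec_def sum_UNIV_split_reindex[OF inj \<sigma>])
  moreover have "\<bar>a $ \<sigma> i\<bar> \<le> t" for i using small \<sigma> by force
  ultimately have "\<bar>x $ k\<bar> + (\<Sum>i\<in>UNIV. \<bar>x $ \<sigma> i\<bar>) \<le> 1
      \<longleftrightarrow> (\<Sum>i\<in>UNIV. a $ k * \<bar>x $ \<sigma> i\<bar> - a $ \<sigma> i * x $ \<sigma> i) \<le> a $ k - t"
    using t by (intro l1_hyperplane_section_iff) auto
  then show ?thesis
    by (simp add: cross_polytope_def skew_cross_def sum_UNIV_split_reindex[OF inj \<sigma>])
qed

lemma measure_cross_polytope_section: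
  fixes a :: "real^'n::finite" and U :: "real^'m::finite \<Rightarrow> real^'n" and \<sigma> :: "'m \<Rightarrow> 'n"
  assumes lin: "linear U" and norm: "\<And>y. norm (U y) = norm y" and range: "range U = {x. a \<bullet> x = 0}"
    and a: "norm a = 1" and t: "0 < t" "t < a $ k" and small: "\<And>j. j \<noteq> k \<Longrightarrow> \<bar>a $ j\<bar> \<le> t"
    and inj: "inj \<sigma>" and \<sigma>: "range \<sigma> = -{k}"
  shows "measure lebesgue {y. t *\<^sub>R a + U y \<in> cross_polytope}
       = measure lebesgue (skew_cross (a $ k) (\<lambda>i. a $ \<sigma> i) (a $ k - t)) / a $ k"
proof -
  define c where "c = a $ k"
  define b where "b = (\<lambda>i. a $ \<sigma> i)"
  define S where "S = {y. t *\<^sub>R a + U y \<in> cross_polytope}"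
  define P where "P = (\<lambda>y. \<chi> i. U y $ \<sigma> i)"
  define tb :: "real^'m" where "tb = (\<chi> i. t * b i)"
  have c: "c > 0" using t by (simp add: c_def)
  obtain q where U_k: "\<And>y. U y $ k = q \<bullet> y" and qq: "q \<bullet> q = 1 - c\<^sup>2"
    using hyperplane_isometry_component[OF lin norm range a] c_def by blast
  have q: "q \<bullet> q < 1" using qq c by simp
  have lin_P: "linear P" using lin by (auto simp: P_def linear_iff vec_eq_iff)
  have norm_P: "(norm (P y))\<^sup>2 = (norm y)\<^sup>2 - (q \<bullet> y)\<^sup>2" for y
    using norm[of y] U_k[of y] sum_UNIV_split_reindex[OF inj \<sigma>, of "\<lambda>j. (U y $ j)\<^sup>2"]
      norm_power2_cart[of "P y"] norm_power2_cart[of "U y"]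
    by (simp add: P_def)
  have section_iff: "t *\<^sub>R a + U y \<in> cross_polytope \<longleftrightarrow> tb + P y \<in> skew_cross c b (c - t)" for y
  proof -
    have "a \<bullet> U y = 0" using range by auto
    then have "a \<bullet> (t *\<^sub>R a + U y) = t" using a by (simp add: inner_add_right dot_square_norm)
    moreover have "(\<chi> i. (t *\<^sub>R a + U y) $ \<sigma> i) = tb + P y"
      by (simp add: tb_def P_def b_def vec_eq_iff)
    ultimately show ?thesis
      using cross_polytope_hyperplane_iff[OF _ t small inj \<sigma>] by (simp add: c_def b_def)
  qed
  have "(+) tb ` P ` S = skew_cross c b (c - t)"
  proof (intro equalityI subsetI)
    fix v assume "v \<in> skew_cross c b (c - t)"
    moreover obtain y where "P y = v - tb" using surj_contraction[OF lin_P norm_P q] by (metis surjD)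
    ultimately show "v \<in> (+) tb ` P ` S" using section_iff[of y] by (force simp: S_def)
  qed (auto simp: S_def section_iff)
  then have "measure lebesgue (skew_cross c b (c - t)) = measure lebesgue (P ` S)"
    by (metis measure_translation)
  also have "\<dots> = c * measure lebesgue S"
    using measure_contraction_image[OF lin_P norm_P q] lmeasurable_cross_polytope_preimage[OF lin norm] c qq
    by (simp add: S_def)
  finally show ?thesis using c by (simp add: S_def c_def b_def)
qed

lemma exists_bij_onto_compl_singleton:
  fixes k :: "'n::finite"
  assumes dim: "CARD('n) = CARD('m::finite) + 1"
  obtains \<sigma> :: "'m::finite \<Rightarrow> 'n" where "inj \<sigma>" "range \<sigma> = -{k}"
proof -
  have "card (-{k}) = CARD('m)" using dim by (simp add: Compl_eq_Diff_UNIV card_Diff_singleton)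
  then obtain h where "bij_betw h (UNIV::'m set) (-{k})"
    using finite_same_card_bij[of "UNIV::'m set" "-{k}"] by auto
  then show thesis using that by (metis bij_betw_imp_inj_on bij_betw_imp_surj_on)
qed

lemma section_area_eq:
  fixes a :: "real^'n::finite" and k :: 'n
  assumes dim: "CARD('n) = CARD('m::finite) + 1" and a: "norm a = 1" and t: "0 < t" "t < a $ k"
    and small: "\<And>j. j \<noteq> k \<Longrightarrow> \<bar>a $ j\<bar> \<le> t"
  shows "section_area TYPE('m) a t = measure lebesgue (std_simplex :: (real^'m) set) * 2 ^ CARD('m)
      * (a $ k) ^ (CARD('m) - 1) * (a $ k - t) ^ CARD('m) / (\<Prod>j\<in>-{k}. (a $ k)\<^sup>2 - (a $ j)\<^sup>2)"
proof -
  obtain \<sigma> :: "'m \<Rightarrow> 'n" where inj: "inj \<sigma>" and \<sigma>: "range \<sigma> = -{k}"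
    using exists_bij_onto_compl_singleton[OF dim] by blast
  define c where "c = a $ k"
  define M where "M = measure lebesgue (std_simplex :: (real^'m) set)"
  have c: "c > 0" using t by (simp add: c_def)
  have "a \<noteq> 0" using a by auto
  note U = hyperplane_param_isometry[OF this dim]
  have "section_area TYPE('m) a t = measure lebesgue (skew_cross c (\<lambda>i. a $ \<sigma> i) (c - t)) / c"
    unfolding section_area_def c_def
    by (rule measure_cross_polytope_section[OF U a t small inj \<sigma>])
  also have "measure lebesgue (skew_cross c (\<lambda>i. a $ \<sigma> i) (c - t))
      = M * (\<Prod>i\<in>UNIV. 2 * c * (c - t) / (c\<^sup>2 - (a $ \<sigma> i)\<^sup>2))"
    unfolding M_def
  proof (rule measure_skew_cross)
    show "0 < c - t" using t by (simp add: c_def)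
    show "\<bar>a $ \<sigma> i\<bar> < c" for i
    proof -
      have "\<sigma> i \<noteq> k" using \<sigma> by auto
      then show ?thesis using small[of "\<sigma> i"] t by (simp add: c_def)
    qed
  qed
  also have "(\<Prod>i\<in>UNIV. 2 * c * (c - t) / (c\<^sup>2 - (a $ \<sigma> i)\<^sup>2))
      = (2 * c * (c - t)) ^ CARD('m) / (\<Prod>j\<in>-{k}. c\<^sup>2 - (a $ j)\<^sup>2)"
  proof -
    have "(\<Prod>j\<in>-{k}. c\<^sup>2 - (a $ j)\<^sup>2) = (\<Prod>i\<in>UNIV. c\<^sup>2 - (a $ \<sigma> i)\<^sup>2)"
      unfolding \<sigma>[symmetric] prod.reindex[OF inj] by (simp add: o_def)
    then show ?thesis by (simp add: prod_dividef)
  qed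
  also have "M * ((2 * c * (c - t)) ^ CARD('m) / (\<Prod>j\<in>-{k}. c\<^sup>2 - (a $ j)\<^sup>2)) / c
      = M * 2 ^ CARD('m) * c ^ (CARD('m) - 1) * (c - t) ^ CARD('m) / (\<Prod>j\<in>-{k}. c\<^sup>2 - (a $ j)\<^sup>2)"
  proof -
    obtain n where n: "CARD('m) = Suc n" using gr0_implies_Suc[OF zero_less_card_finite] by blast
    have "(2 * c * (c - t)) ^ Suc n = c * (2 ^ Suc n * c ^ n * (c - t) ^ Suc n)"
      by (simp add: power_mult_distrib)
    then show ?thesis using c unfolding n by simp
  qed
  finally show ?thesis by (simp add: M_def c_def)
qed

section \<open>Elementary inequalities\<close>

lemma one_minus_sum_le_prod:
  fixes y :: "'i \<Rightarrow> real"
  assumes "finite I" and "\<And>i. i \<in> I \<Longrightarrow> 0 \<le> y i \<and> y i \<le> 1"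
  shows "1 - (\<Sum>i\<in>I. y i) \<le> (\<Prod>i\<in>I. 1 - y i)"
  using assms
proof (induction I rule: finite_induct)
  case empty then show ?case by simp
next
  case (insert x F)
  have y: "0 \<le> y x" "y x \<le> 1" and "0 \<le> (\<Sum>i\<in>F. y i)"
    using insert by (auto intro: sum_nonneg)
  then have "1 - (y x + (\<Sum>i\<in>F. y i)) \<le> (1 - y x) * (1 - (\<Sum>i\<in>F. y i))"
    by (simp add: algebra_simps)
  also have "\<dots> \<le> (1 - y x) * (\<Prod>i\<in>F. 1 - y i)"
    using insert y by (intro mult_left_mono) auto
  finally show ?case using insert by simp
qed

lemma prod_le_mean_power:
  fixes x :: "'i \<Rightarrow> real"
  assumes fin: "finite I" and ne: "I \<noteq> {}" and x: "\<And>i. i \<in> I \<Longrightarrow> 0 \<le> x i"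
  shows "(\<Prod>i\<in>I. x i) \<le> ((\<Sum>i\<in>I. x i) / card I) ^ card I"
proof (cases "(\<Prod>i\<in>I. x i) = 0")
  case True
  then show ?thesis using x by (simp add: sum_nonneg)
next
  case False
  then have pos: "(\<Prod>i\<in>I. x i) > 0" using x by (simp add: less_le prod_nonneg)
  have card: "card I > 0" using fin ne by (simp add: card_gt_0_iff)
  have "(\<Prod>i\<in>I. x i) = ((\<Prod>i\<in>I. x i) powr (1 / card I)) ^ card I"
    using pos card by (simp add: powr_realpow[symmetric] powr_powr)
  also have "\<dots> \<le> ((\<Sum>i\<in>I. x i) / card I) ^ card I"
    using arith_geom_mean[OF fin ne x] by (intro power_mono) (auto simp: sum_divide_distrib)
  finally show ?thesis .
qed

lemma le_left_of_deriv_pos: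
  fixes f :: "real \<Rightarrow> real"
  assumes "(f has_real_derivative D) (at x)" and "D > 0"
  obtains d where "d > 0" and "\<And>y. x - d < y \<Longrightarrow> y \<le> x \<Longrightarrow> f y \<le> f x"
proof -
  obtain d where "d > 0" and d: "\<And>h. 0 < h \<Longrightarrow> h < d \<Longrightarrow> f (x - h) < f x"
    using DERIV_pos_inc_left[OF assms] by blast
  moreover have "f y \<le> f x" if "x - d < y" "y \<le> x" for y
    using d[of "x - y"] that by (cases "y = x") auto
  ultimately show thesis using that by blast
qed

lemma has_real_derivative_section_numerator:
  fixes t :: real and m :: nat
  assumes "m \<ge> 1"
  shows "((\<lambda>c. c ^ (m - 1) * (c - t) ^ m) has_real_derivative
      (1 - t) ^ (m - 1) * (real m - (real m + 3) * (1 - t)) + 2 * (real m + 1) * (1 - t) ^ m) (at 1)"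
proof -
  obtain n where m: "m = Suc n" using assms by (cases m) auto
  have "((\<lambda>c. c ^ n * (c - t) ^ Suc n) has_real_derivative
      real n * 1 ^ (n - 1) * (1 - t) ^ Suc n + 1 ^ n * (real (Suc n) * (1 - t) ^ n)) (at 1)"
    by (auto intro!: derivative_eq_intros) (cases n; simp add: algebra_simps)
  moreover have "real n * 1 ^ (n - 1) * (1 - t) ^ Suc n + 1 ^ n * (real (Suc n) * (1 - t) ^ n)
      = (1 - t) ^ n * (real (Suc n) - (real (Suc n) + 3) * (1 - t)) + 2 * (real (Suc n) + 1) * (1 - t) ^ Suc n"
    by (simp add: algebra_simps)
  ultimately show ?thesis unfolding m by simp
qed

lemma has_real_derivative_mean_power_at_one:
  fixes m :: nat
  assumes "m \<ge> 1"
  shows "((\<lambda>c. (((real m + 1) * c\<^sup>2 - 1) / real m) ^ m) has_real_derivative 2 * (real m + 1)) (at 1)"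
proof -
  define g where "g = (\<lambda>c::real. ((real m + 1) * c\<^sup>2 - 1) / real m)"
  have m: "real m \<noteq> 0" using assms by simp
  have "(g has_real_derivative (real m + 1) * 2 / real m) (at 1)"
    unfolding g_def using m by (auto intro!: derivative_eq_intros simp: field_simps)
  from DERIV_power[OF this, of m]
  have "((\<lambda>c. g c ^ m) has_real_derivative real m * ((real m + 1) * 2 / real m * g 1 ^ (m - 1))) (at 1)"
    by simp
  moreover have "real m * ((real m + 1) * 2 / real m * g 1 ^ (m - 1)) = 2 * (real m + 1)"
    using m by (simp add: g_def)
  ultimately show ?thesis by (simp add: g_def)
qed

lemma section_numerator_le_near_one:
  fixes t :: real and m :: nat
  assumes m: "m \<ge> 1" and t: "3 / (real m + 3) < t" "t < 1"
  obtains d where "d > 0"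
    and "\<And>c. 1 - d < c \<Longrightarrow> c \<le> 1 \<Longrightarrow> c ^ (m - 1) * (c - t) ^ m \<le> (1 - t) ^ m * ((real m + 1) * c\<^sup>2 - real m)"
proof -
  define D where "D = (1 - t) ^ (m - 1) * (real m - (real m + 3) * (1 - t))"
  have "(real m + 3) * (1 - t) < real m"
    using t by (simp add: field_simps)
  then have "D > 0" using t by (simp add: D_def)
  have "((\<lambda>c. (1 - t) ^ m * ((real m + 1) * c\<^sup>2 - real m)) has_real_derivative 2 * (real m + 1) * (1 - t) ^ m) (at 1)"
    by (auto intro!: derivative_eq_intros simp: algebra_simps)
  from DERIV_diff[OF has_real_derivative_section_numerator[OF m, of t] this]
  have "((\<lambda>c. c ^ (m - 1) * (c - t) ^ m - (1 - t) ^ m * ((real m + 1) * c\<^sup>2 - real m))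
      has_real_derivative D) (at 1)"
    by (simp add: D_def)
  then obtain d where "d > 0"
    and "\<And>c. 1 - d < c \<Longrightarrow> c \<le> 1 \<Longrightarrow>
      c ^ (m - 1) * (c - t) ^ m - (1 - t) ^ m * ((real m + 1) * c\<^sup>2 - real m) \<le> 0"
    using \<open>D > 0\<close> by (rule le_left_of_deriv_pos) simp
  then show thesis using that by force
qed

lemma section_numerator_ge_near_one:
  fixes t :: real and m :: nat
  assumes m: "m \<ge> 1" and t: "0 < t" "t < 3 / (real m + 3)"
  obtains d where "d > 0"
    and "\<And>c. 1 - d < c \<Longrightarrow> c \<le> 1 \<Longrightarrow>
      (1 - t) ^ m * (((real m + 1) * c\<^sup>2 - 1) / real m) ^ m \<le> c ^ (m - 1) * (c - t) ^ m"
proof -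
  define D where "D = - ((1 - t) ^ (m - 1) * (real m - (real m + 3) * (1 - t)))"
  have gap: "real m < (real m + 3) * (1 - t)"
    using t by (simp add: field_simps)
  then have "0 < (real m + 3) * (1 - t)" by linarith
  then have "t < 1" by (simp add: zero_less_mult_iff)
  with gap have "D > 0" by (simp add: D_def mult_pos_neg)
  from DERIV_cmult[OF has_real_derivative_mean_power_at_one[OF m], of "(1 - t) ^ m"]
  have "((\<lambda>c. (1 - t) ^ m * (((real m + 1) * c\<^sup>2 - 1) / real m) ^ m) has_real_derivative 2 * (real m + 1) * (1 - t) ^ m) (at 1)"
    by (simp add: algebra_simps)
  from DERIV_diff[OF this has_real_derivative_section_numerator[OF m, of t]]
  have "((\<lambda>c. (1 - t) ^ m * (((real m + 1) * c\<^sup>2 - 1) / real m) ^ m - c ^ (m - 1) * (c - t) ^ m)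
      has_real_derivative D) (at 1)"
    by (simp add: D_def)
  then obtain d where "d > 0"
    and "\<And>c. 1 - d < c \<Longrightarrow> c \<le> 1 \<Longrightarrow>
      (1 - t) ^ m * (((real m + 1) * c\<^sup>2 - 1) / real m) ^ m - c ^ (m - 1) * (c - t) ^ m \<le> 0"
    using \<open>D > 0\<close> by (rule le_left_of_deriv_pos) (use m in simp)
  then show thesis using that by force
qed

section \<open>The extremum at the axis\<close>

lemma near_axis_on_sphere:
  fixes k :: "'n::finite"
  assumes t: "0 < t" "t < 1" and d: "d > 0"
  obtains e where "e > 0"
    and "\<And>a::real^'n. norm a = 1 \<Longrightarrow> dist a (axis k 1) < e \<Longrightarrow>
      t < a $ k \<and> 1 - d < a $ k \<and> (\<forall>j. j \<noteq> k \<longrightarrow> \<bar>a $ j\<bar> \<le> t)"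
proof
  show "0 < min d (min t ((1 - t) / 2))" using t d by simp
  fix a :: "real^'n" assume "dist a (axis k 1) < min d (min t ((1 - t) / 2))"
  then have close: "\<bar>a $ j - axis k 1 $ j\<bar> < min d (min t ((1 - t) / 2))" for j
    using component_le_norm_cart[of "a - axis k 1" j] by (simp add: dist_norm)
  from close[of k] have "\<bar>a $ k - 1\<bar> < d" "\<bar>a $ k - 1\<bar> < (1 - t) / 2" by simp_all
  then have "t < a $ k \<and> 1 - d < a $ k"
    using t unfolding abs_less_iff by (simp add: field_simps)
  moreover have "\<bar>a $ j\<bar> \<le> t" if "j \<noteq> k" for j
    using close[of j] that by (simp add: axis_def)
  ultimately show "t < a $ k \<and> 1 - d < a $ k \<and> (\<forall>j. j \<noteq> k \<longrightarrow> \<bar>a $ j\<bar> \<le> t)" by blast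
qed

lemma square_gaps_near_axis:
  fixes a :: "real^'n::finite"
  assumes a: "norm a = 1" and t: "0 < t" "t < a $ k" and small: "\<And>j. j \<noteq> k \<Longrightarrow> \<bar>a $ j\<bar> \<le> t"
  shows "\<And>j. j \<noteq> k \<Longrightarrow> 0 < (a $ k)\<^sup>2 - (a $ j)\<^sup>2 \<and> (a $ k)\<^sup>2 - (a $ j)\<^sup>2 \<le> 1"
    and "(\<Sum>j\<in>-{k}. (a $ k)\<^sup>2 - (a $ j)\<^sup>2) = real CARD('n) * (a $ k)\<^sup>2 - 1"
proof -
  have "a $ k \<le> 1" using component_le_norm_cart[of a k] a by simp
  then have sq: "(a $ k)\<^sup>2 \<le> 1" using t by (intro power_le_one) auto
  show "0 < (a $ k)\<^sup>2 - (a $ j)\<^sup>2 \<and> (a $ k)\<^sup>2 - (a $ j)\<^sup>2 \<le> 1" if "j \<noteq> k" for j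
  proof -
    have "\<bar>a $ j\<bar> < \<bar>a $ k\<bar>" using small[OF that] t by simp
    then have "(a $ j)\<^sup>2 < (a $ k)\<^sup>2" by (meson abs_le_square_iff not_le)
    moreover have "0 \<le> (a $ j)\<^sup>2" by simp
    ultimately show ?thesis using sq by linarith
  qed
  have "1 = (\<Sum>j\<in>UNIV. (a $ j)\<^sup>2)" using a norm_power2_cart[of a] by simp
  also have "\<dots> = (a $ k)\<^sup>2 + (\<Sum>j\<in>-{k}. (a $ j)\<^sup>2)"
    by (simp add: Compl_eq_Diff_UNIV sum.remove)
  finally show "(\<Sum>j\<in>-{k}. (a $ k)\<^sup>2 - (a $ j)\<^sup>2) = real CARD('n) * (a $ k)\<^sup>2 - 1"
    by (simp add: sum_subtractf Compl_eq_Diff_UNIV card_Diff_singleton of_nat_diff algebra_simps)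
qed

lemma section_area_axis:
  fixes k :: "'n::finite"
  assumes dim: "CARD('n) = CARD('m::finite) + 1" and t: "0 < t" "t < 1"
  shows "section_area TYPE('m) (axis k 1 :: real^'n) t
    = measure lebesgue (std_simplex :: (real^'m) set) * 2 ^ CARD('m) * (1 - t) ^ CARD('m)"
  using section_area_eq[OF dim norm_axis_1, of t k] t by (simp add: axis_def)

lemma section_area_near_axis:
  fixes a :: "real^'n::finite"
  assumes dim: "CARD('n) = CARD('m::finite) + 1" and a: "norm a = 1"
    and t: "0 < t" "t < a $ k" and small: "\<And>j. j \<noteq> k \<Longrightarrow> \<bar>a $ j\<bar> \<le> t"
  shows "section_area TYPE('m) a t = section_area TYPE('m) (axis k 1 :: real^'n) t *
    ((a $ k) ^ (CARD('m) - 1) * (a $ k - t) ^ CARD('m)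
      / ((1 - t) ^ CARD('m) * (\<Prod>j\<in>-{k}. (a $ k)\<^sup>2 - (a $ j)\<^sup>2)))"
proof -
  have "t < 1" using t component_le_norm_cart[of a k] a by simp
  then have "(1 - t) ^ CARD('m) \<noteq> 0" by simp
  then show ?thesis
    using section_area_eq[OF dim a t small] section_area_axis[OF dim t(1) \<open>t < 1\<close>, of k]
    by (simp add: ac_simps)
qed

lemma section_area_ratio_bounds:
  fixes a :: "real^'n::finite"
  assumes dim: "CARD('n) = CARD('m::finite) + 1" and a: "norm a = 1"
    and t: "0 < t" "t < a $ k" and small: "\<And>j. j \<noteq> k \<Longrightarrow> \<bar>a $ j\<bar> \<le> t"
  obtains D where "D > 0"
    and "section_area TYPE('m) a t = section_area TYPE('m) (axis k 1 :: real^'n) t *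
      ((a $ k) ^ (CARD('m) - 1) * (a $ k - t) ^ CARD('m) / ((1 - t) ^ CARD('m) * D))"
    and "(real CARD('m) + 1) * (a $ k)\<^sup>2 - real CARD('m) \<le> D"
    and "D \<le> (((real CARD('m) + 1) * (a $ k)\<^sup>2 - 1) / real CARD('m)) ^ CARD('m)"
proof
  define g where "g = (\<lambda>j. (a $ k)\<^sup>2 - (a $ j)\<^sup>2)"
  have card: "card (-{k}) = CARD('m)"
    using dim by (simp add: Compl_eq_Diff_UNIV card_Diff_singleton)
  note gaps = square_gaps_near_axis[OF a t small, folded g_def]
  have sum_g: "(\<Sum>j\<in>-{k}. g j) = (real CARD('m) + 1) * (a $ k)\<^sup>2 - 1"
    using gaps(2) dim by simp
  show "(\<Prod>j\<in>-{k}. g j) > 0" using gaps(1) by (intro prod_pos) (auto simp: g_def)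
  show "section_area TYPE('m) a t = section_area TYPE('m) (axis k 1 :: real^'n) t *
      ((a $ k) ^ (CARD('m) - 1) * (a $ k - t) ^ CARD('m) / ((1 - t) ^ CARD('m) * (\<Prod>j\<in>-{k}. g j)))"
    unfolding g_def by (rule section_area_near_axis[OF dim a t small])
  have "1 - (\<Sum>j\<in>-{k}. 1 - g j) \<le> (\<Prod>j\<in>-{k}. 1 - (1 - g j))"
    using gaps(1) by (intro one_minus_sum_le_prod) (auto simp: less_imp_le g_def)
  then show "(real CARD('m) + 1) * (a $ k)\<^sup>2 - real CARD('m) \<le> (\<Prod>j\<in>-{k}. g j)"
    by (simp add: sum_subtractf sum_g card)
  have "(\<Prod>j\<in>-{k}. g j) \<le> ((\<Sum>j\<in>-{k}. g j) / card (-{k})) ^ card (-{k})"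
    using gaps(1) card by (intro prod_le_mean_power) (auto simp: less_imp_le g_def)
  then show "(\<Prod>j\<in>-{k}. g j) \<le> (((real CARD('m) + 1) * (a $ k)\<^sup>2 - 1) / real CARD('m)) ^ CARD('m)"
    by (simp add: sum_g card)
qed

lemma section_area_local_max:
  fixes k :: "'n::finite"
  assumes dim: "CARD('n) = CARD('m::finite) + 1" and t: "3 / (real CARD('m) + 3) < t" "t < 1"
  shows "is_local_max_sphere (\<lambda>a. section_area TYPE('m) a t) (axis k 1 :: real^'n)"
proof -
  define m where "m = CARD('m)"
  have m: "m \<ge> 1" by (simp add: m_def Suc_le_eq)
  have "0 < 3 / (real m + 3)" by simp
  then have t0: "0 < t" using t unfolding m_def by linarith
  obtain d where "d > 0" and numerator: "\<And>c. 1 - d < c \<Longrightarrow> c \<le> 1 \<Longrightarrow>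
      c ^ (m - 1) * (c - t) ^ m \<le> (1 - t) ^ m * ((real m + 1) * c\<^sup>2 - real m)"
    using section_numerator_le_near_one[OF m] t by (auto simp: m_def)
  obtain e where "e > 0" and near: "\<And>a::real^'n. norm a = 1 \<Longrightarrow> dist a (axis k 1) < e \<Longrightarrow>
      t < a $ k \<and> 1 - d < a $ k \<and> (\<forall>j. j \<noteq> k \<longrightarrow> \<bar>a $ j\<bar> \<le> t)"
    using near_axis_on_sphere[OF t0 t(2) \<open>d > 0\<close>] by blast
  show ?thesis unfolding is_local_max_sphere_def
  proof (intro exI[of _ e] conjI allI impI)
    fix a :: "real^'n" assume a: "norm a = 1 \<and> dist a (axis k 1) < e"
    then have c: "t < a $ k" "1 - d < a $ k" "a $ k \<le> 1" and small: "\<And>j. j \<noteq> k \<Longrightarrow> \<bar>a $ j\<bar> \<le> t"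
      using near[of a] component_le_norm_cart[of a k] by auto
    obtain D where D: "D > 0" and area: "section_area TYPE('m) a t = section_area TYPE('m) (axis k 1 :: real^'n) t *
        ((a $ k) ^ (m - 1) * (a $ k - t) ^ m / ((1 - t) ^ m * D))"
      and lower: "(real m + 1) * (a $ k)\<^sup>2 - real m \<le> D"
      using section_area_ratio_bounds[OF dim _ t0 c(1) small] a unfolding m_def by blast
    have "(a $ k) ^ (m - 1) * (a $ k - t) ^ m \<le> (1 - t) ^ m * D"
      using numerator[OF c(2,3)] lower t by (elim order_trans) (simp add: mult_left_mono)
    then have "(a $ k) ^ (m - 1) * (a $ k - t) ^ m / ((1 - t) ^ m * D) \<le> 1"
      using D t by simp
    then show "section_area TYPE('m) a t \<le> section_area TYPE('m) (axis k 1 :: real^'n) t"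
      unfolding area by (rule mult_left_le) (simp add: section_area_def)
  qed (rule \<open>e > 0\<close>)
qed

lemma section_area_local_min:
  fixes k :: "'n::finite"
  assumes dim: "CARD('n) = CARD('m::finite) + 1" and t: "0 < t" "t < 3 / (real CARD('m) + 3)"
  shows "is_local_min_sphere (\<lambda>a. section_area TYPE('m) a t) (axis k 1 :: real^'n)"
proof -
  define m where "m = CARD('m)"
  have m: "m \<ge> 1" by (simp add: m_def Suc_le_eq)
  have "3 / (real m + 3) \<le> 1" by simp
  then have t1: "t < 1" using t unfolding m_def by linarith
  obtain d where "d > 0" and numerator: "\<And>c. 1 - d < c \<Longrightarrow> c \<le> 1 \<Longrightarrow>
      (1 - t) ^ m * (((real m + 1) * c\<^sup>2 - 1) / real m) ^ m \<le> c ^ (m - 1) * (c - t) ^ m"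
    using section_numerator_ge_near_one[OF m] t by (auto simp: m_def)
  obtain e where "e > 0" and near: "\<And>a::real^'n. norm a = 1 \<Longrightarrow> dist a (axis k 1) < e \<Longrightarrow>
      t < a $ k \<and> 1 - d < a $ k \<and> (\<forall>j. j \<noteq> k \<longrightarrow> \<bar>a $ j\<bar> \<le> t)"
    using near_axis_on_sphere[OF t(1) t1 \<open>d > 0\<close>] by blast
  show ?thesis unfolding is_local_min_sphere_def
  proof (intro exI[of _ e] conjI allI impI)
    fix a :: "real^'n" assume a: "norm a = 1 \<and> dist a (axis k 1) < e"
    then have c: "t < a $ k" "1 - d < a $ k" "a $ k \<le> 1" and small: "\<And>j. j \<noteq> k \<Longrightarrow> \<bar>a $ j\<bar> \<le> t"
      using near[of a] component_le_norm_cart[of a k] by auto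
    obtain D where D: "D > 0" and area: "section_area TYPE('m) a t = section_area TYPE('m) (axis k 1 :: real^'n) t *
        ((a $ k) ^ (m - 1) * (a $ k - t) ^ m / ((1 - t) ^ m * D))"
      and upper: "D \<le> (((real m + 1) * (a $ k)\<^sup>2 - 1) / real m) ^ m"
      using section_area_ratio_bounds[OF dim _ t(1) c(1) small] a unfolding m_def by blast
    have "(1 - t) ^ m * D \<le> (a $ k) ^ (m - 1) * (a $ k - t) ^ m"
      using upper t1 by (intro order_trans[OF _ numerator[OF c(2,3)]]) (simp add: mult_left_mono)
    then have "1 \<le> (a $ k) ^ (m - 1) * (a $ k - t) ^ m / ((1 - t) ^ m * D)"
      using D t1 by simp
    moreover have "0 \<le> section_area TYPE('m) (axis k 1 :: real^'n) t"
      by (simp add: section_area_def)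
    ultimately show "section_area TYPE('m) (axis k 1 :: real^'n) t \<le> section_area TYPE('m) a t"
      unfolding area by (metis mult_left_mono mult.right_neutral)
  qed (rule \<open>e > 0\<close>)
qed

theorem proposition3:
  fixes k :: "'n::finite" and t :: real
  assumes dim: "CARD('n) = CARD('m) + 1"
  shows "(CARD('n) \<ge> 3 \<and> 3 / (real CARD('n) + 2) < t \<and> t \<le> 1 / sqrt 2 \<longrightarrow>
            is_local_max_sphere (\<lambda>a. section_area TYPE('m::finite) a t) (axis k 1 :: real^'n))
       \<and> (CARD('n) \<ge> 3 \<and> 0 < t \<and> t < 3 / (real CARD('n) + 2) \<longrightarrow>
            is_local_min_sphere (\<lambda>a. section_area TYPE('m::finite) a t) (axis k 1 :: real^'n))
       \<and> (CARD('n) = 2 \<and> 0 < t \<and> t < 3 / 4 \<longrightarrow>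
            is_local_min_sphere (\<lambda>a. section_area TYPE('m::finite) a t) (axis k 1 :: real^'n))"
proof -
  have threshold: "3 / (real CARD('n) + 2) = 3 / (real CARD('m) + 3)"
    using dim by simp
  show ?thesis
  proof (intro conjI impI)
    assume t: "CARD('n) \<ge> 3 \<and> 3 / (real CARD('n) + 2) < t \<and> t \<le> 1 / sqrt 2"
    have "1 / sqrt 2 < (1::real)" by (simp add: divide_less_eq)
    with t have "t < 1" by linarith
    with t show "is_local_max_sphere (\<lambda>a. section_area TYPE('m) a t) (axis k 1 :: real^'n)"
      using section_area_local_max[OF dim] threshold by simp
  next
    assume "CARD('n) \<ge> 3 \<and> 0 < t \<and> t < 3 / (real CARD('n) + 2)"
    then show "is_local_min_sphere (\<lambda>a. section_area TYPE('m) a t) (axis k 1 :: real^'n)"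
      unfolding threshold by (intro section_area_local_min[OF dim]) auto
  next
    assume t: "CARD('n) = 2 \<and> 0 < t \<and> t < 3 / 4"
    then have "CARD('m) = 1" using dim by simp
    with t show "is_local_min_sphere (\<lambda>a. section_area TYPE('m) a t) (axis k 1 :: real^'n)"
      by (intro section_area_local_min[OF dim]) auto
  qed
qed

end
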